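(* Let $S=\{x_1,\ldots,x_n\}$ be a factor-closed set of $n$ distinct positive integers, let $m\ge1$, $\boldsymbol\gamma=(\gamma_1,\ldots,\gamma_m)\in\mathbb{N}^m$, $f_1,\ldots,f_{m+1}$ arithmetic functions, and $\xi:\mathbb{N}^m\to\mathbb{C}$ an arbitrary function. Let $I=\{2,3,\ldots,m+1\}$ if $m$ is even and $I=\{1,2,\ldots,m+1\}$ if $m$ is odd. Then \[ \det_I\bigl(S^{\boldsymbol\gamma,\xi}_{f_1,\ldots,f_{m+1}}(x_{i_1},\ldots,x_{i_{m+1}})\bigr)_{1\le i_1,\ldots,i_{m+1}\le n}=\bigl(f_1(1)\cdots f_m(1)\bigr)^n\prod_{v=1}^n\xi(x_v,\ldots,x_v)\,f_{m+1}^{[\operatorname{lcm}(\gamma_1,\ldots,\gamma_m)]}(x_v). \]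
   Context: A set $S$ of positive integers is factor-closed if every positive divisor of every element of $S$ lies in $S$. An arithmetic function is a map $f:\mathbb{N}\to\mathbb{C}$, with $f(x)=0$ for $x\notin\mathbb{N}$. For $\gamma\in\mathbb{N}$, $a_\gamma(n)=1$ if $n=d^\gamma$ for some $d\in\mathbb{N}$ and $0$ otherwise, and $f^{[\gamma]}(n):=a_\gamma(n)f(n)$. The weighted multiple Ramanujan sum is \[ S^{\boldsymbol\gamma,\xi}_{f_1,\ldots,f_{m+1}}(n_1,\ldots,n_{m+1}):=\sum_{\substack{(d_1,\ldots,d_m)\in\mathbb{N}^m\\ d_j^{\gamma_j}\mid\gcd(n_1,\ldots,n_{j+1})\ (1\le j\le m)}}\xi(d_1^{\gamma_1},\ldots,d_m^{\gamma_m})\,f_1\Bigl(\frac{n_1}{d_1^{\gamma_1}}\Bigr)f_2\Bigl(\frac{d_1^{\gamma_1}}{d_2^{\gamma_2}}\Bigr)\cdots f_m\Bigl(\frac{d_{m-1}^{\gamma_{m-1}}}{d_m^{\gamma_m}}\Bigr)f_{m+1}\bigl(d_m^{\gamma_m}\bigr). \] For a $K$-dimensional matrix $A$ of order $n$ and $J\subseteq\{1,\ldots,K\}$, with $\eta_j=1$ if $j\in J$ and $0$ otherwise, the hyperdeterminant is $\det_JA:=\frac{1}{n!}\sum_{\sigma_1,\ldots,\sigma_K\in\mathfrak{S}_n}\prod_{j=1}^K\mathrm{sgn}(\sigma_j)^{\eta_j}\prod_{v=1}^nA(\sigma_1(v),\ldots,\sigma_K(v))$, $\mathfrak{S}_n$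 the symmetric group on $\{1,\ldots,n\}$. *)

theory Defs
  imports Complex_Main "HOL-Combinatorics.Permutations"
begin

definition factor_closed :: "nat set \<Rightarrow> bool" where
  "factor_closed S \<longleftrightarrow> (\<forall>s\<in>S. \<forall>d. 0 < d \<and> d dvd s \<longrightarrow> d \<in> S)"

text \<open>Evaluation of an arithmetic function at the rational a/b, with the
  convention f(x) = 0 when x is not a positive integer.\<close>
definition arith_at :: "(nat \<Rightarrow> complex) \<Rightarrow> nat \<Rightarrow> nat \<Rightarrow> complex" where
  "arith_at f a b = (if b \<noteq> 0 \<and> a \<noteq> 0 \<and> b dvd a then f (a div b) else 0)"

definition a_pow :: "nat \<Rightarrow> nat \<Rightarrow> complex" where
  "a_pow g k = (if \<exists>d. 0 < d \<and> k = d ^ g then 1 else 0)"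

definition restr_pow :: "nat \<Rightarrow> (nat \<Rightarrow> complex) \<Rightarrow> nat \<Rightarrow> complex" where
  "restr_pow g f k = a_pow g k * f k"

text \<open>Indices: gamma j for j = 1..m,
  f j for j = 1..m+1, arguments ns i for i = 1..m+1; the tuple (d_1,...,d_m)
  is a function on {1..m}; xi takes the list [d_1^gamma_1, ..., d_m^gamma_m].\<close>
definition wmrs :: "nat \<Rightarrow> (nat \<Rightarrow> nat) \<Rightarrow> (nat list \<Rightarrow> complex) \<Rightarrow>
    (nat \<Rightarrow> nat \<Rightarrow> complex) \<Rightarrow> (nat \<Rightarrow> nat) \<Rightarrow> complex" where
  "wmrs m \<gamma> \<xi> f ns =
    (\<Sum>d \<in> {d \<in> {1..m} \<rightarrow>\<^sub>E UNIV. \<forall>j\<in>{1..m}. 0 < d j \<and> d j ^ \<gamma> j dvd Gcd (ns ` {1..j+1})}.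
        \<xi> (map (\<lambda>j. d j ^ \<gamma> j) [1..<m+1])
        * arith_at (f 1) (ns 1) (d 1 ^ \<gamma> 1)
        * (\<Prod>j\<in>{2..m}. arith_at (f j) (d (j-1) ^ \<gamma> (j-1)) (d j ^ \<gamma> j))
        * f (m+1) (d m ^ \<gamma> m))"

text \<open>Hyperdeterminant det_J of a K-dimensional matrix A of order n
  (A takes an index tuple i_1..i_K as a function on {1..K}).\<close>
definition hyperdet :: "nat \<Rightarrow> nat \<Rightarrow> nat set \<Rightarrow> ((nat \<Rightarrow> nat) \<Rightarrow> complex) \<Rightarrow> complex" where
  "hyperdet K n J A = (1 / of_nat (fact n)) *
     (\<Sum>\<sigma> \<in> {1..K} \<rightarrow>\<^sub>E {p. p permutes {1..n}}.
        (\<Prod>j\<in>{1..K}. if j \<in> J then of_int (sign (\<sigma> j)) else 1) *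
        (\<Prod>v\<in>{1..n}. A (\<lambda>j. \<sigma> j v)))"

end

theory Submission
  imports Defs "HOL-Computational_Algebra.Nth_Powers"
begin

text \<open>
  Because the set is factor-closed, every d_j^gamma_j occurring in the Ramanujan sum is one of the
  x_k. Hence the tensor factors as A(i) = sum_k Phi(i_1; k) * prod_{j>=2} [x_{k_j} dvd x_{i_j}],
  where k runs over tuples of indices and Phi(a; k) is nonzero only if every x_{k_j} divides x_a.
  Expanding the hyperdeterminant multilinearly, the signed sum over each sigma_j with j >= 2 is the
  determinant of the divisibility matrix with columns rearranged by k_j: it vanishes unless k_j is
  a permutation, and then equals sign k_j, the divisibility matrix being unitriangular for the order
  by size. Comparing total sizes, the support condition on Phi then forces k_j = sigma_1 for all j;
  as I has even cardinality the signs cancel, leaving n! * prod_v Phi(v; v, ..., v). Finally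
  Phi(v; v, ..., v) is nonzero only if x_v is a gamma_j-th power for every j, that is, an
  lcm(gamma)-th power.
\<close>

section \<open>Permutations and determinants\<close>

lemma bij_betw_eq_if_weight_le:
  fixes w :: "'a \<Rightarrow> 'b::ordered_cancel_comm_monoid_add"
  assumes "finite A" "inj_on w A" "bij_betw \<sigma> A A" "bij_betw \<tau> A A"
    and "\<And>v. v \<in> A \<Longrightarrow> w (\<sigma> v) \<le> w (\<tau> v)" and "v \<in> A"
  shows "\<sigma> v = \<tau> v"
proof -
  have "(\<Sum>v\<in>A. w (\<sigma> v)) = (\<Sum>v\<in>A. w (\<tau> v))"
    using sum.reindex_bij_betw[OF assms(3), of w] sum.reindex_bij_betw[OF assms(4), of w] by simp
  then have "w (\<sigma> v) = w (\<tau> v)"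
    using sum_mono_inv[where f = "\<lambda>v. w (\<sigma> v)" and g = "\<lambda>v. w (\<tau> v)"] assms(1,5,6)
    by blast
  then show ?thesis
    using assms(2,3,4,6) by (meson bij_betwE inj_onD)
qed

lemma permutes_eqI:
  assumes "p permutes A" "q permutes A" "\<And>v. v \<in> A \<Longrightarrow> p v = q v"
  shows "p = q"
proof
  fix v
  show "p v = q v"
    using assms by (cases "v \<in> A") (simp_all add: permutes_not_in)
qed

lemma permutes_eq_if_weight_le:
  fixes w :: "'a \<Rightarrow> 'b::ordered_cancel_comm_monoid_add"
  assumes "finite A" "inj_on w A" "p permutes A" "q permutes A"
    and "\<And>v. v \<in> A \<Longrightarrow> w (p v) \<le> w (q v)"
  shows "p = q"
  using bij_betw_eq_if_weight_le[OF assms(1,2) permutes_imp_bij[OF assms(3)]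
      permutes_imp_bij[OF assms(4)] assms(5)]
  by (intro permutes_eqI[OF assms(3,4)])

definition leibniz_det :: "'a set \<Rightarrow> ('a \<Rightarrow> 'a \<Rightarrow> 'b::comm_ring_1) \<Rightarrow> 'b" where
  "leibniz_det N M = (\<Sum>\<pi> | \<pi> permutes N. of_int (sign \<pi>) * (\<Prod>v\<in>N. M (\<pi> v) v))"

lemma leibniz_det_cong:
  assumes "\<And>a b. a \<in> N \<Longrightarrow> b \<in> N \<Longrightarrow> M a b = M' a b"
  shows "leibniz_det N M = leibniz_det N M'"
  unfolding leibniz_det_def
  using assms by (intro sum.cong refl arg_cong2[where f = "(*)"] prod.cong)
    (auto simp: permutes_in_image)

lemma leibniz_det_eq_0_if_cols_eq:
  fixes M :: "'a \<Rightarrow> 'a \<Rightarrow> 'b::{idom, ring_char_0}"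
  assumes "finite N" "u \<in> N" "u' \<in> N" "u \<noteq> u'" "\<And>a. M a u = M a u'"
  shows "leibniz_det N M = 0"
proof -
  define t where "t = Transposition.transpose u u'"
  define g where "g \<pi> = of_int (sign \<pi>) * (\<Prod>v\<in>N. M (\<pi> v) v)" for \<pi>
  have t: "t permutes N" "t \<circ> t = id"
    using assms(2,3) by (simp_all add: t_def permutes_swap_id)
  have "leibniz_det N M = (\<Sum>\<pi> | \<pi> permutes N. g (\<pi> \<circ> t))"
    unfolding leibniz_det_def g_def[symmetric]
    by (rule sum.reindex_bij_witness[of _ "\<lambda>\<pi>. \<pi> \<circ> t" "\<lambda>\<pi>. \<pi> \<circ> t"])
      (auto simp: comp_assoc t(2) permutes_compose[OF t(1)])
  also have "\<dots> = (\<Sum>\<pi> | \<pi> permutes N. - g \<pi>)"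
  proof (rule sum.cong[OF refl])
    fix \<pi> assume "\<pi> \<in> {\<pi>. \<pi> permutes N}"
    then have \<pi>: "\<pi> permutes N" by simp
    have "sign (\<pi> \<circ> t) = - sign \<pi>"
      using assms(1,4) by (simp add: sign_compose permutes_imp_permutation[OF _ \<pi>]
          permutation_swap_id t_def sign_swap_id)
    moreover have "(\<Prod>v\<in>N. M (\<pi> (t v)) v) = (\<Prod>v\<in>N. M (\<pi> v) (t v))"
      using prod.permute[OF t(1), of "\<lambda>v. M (\<pi> (t v)) v"] pointfree_idE[OF t(2)]
      by (simp add: comp_def)
    moreover have "M a (t v) = M a v" for a v
      using assms(5) by (simp add: t_def transpose_def)
    ultimately show "g (\<pi> \<circ> t) = - g \<pi>"
      by (simp add: g_def)
  qed
  also have "\<dots> = - leibniz_det N M"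
    by (simp only: sum_negf leibniz_det_def g_def)
  finally have "leibniz_det N M + leibniz_det N M = 0"
    by (metis add.right_inverse)
  then show ?thesis
    by (simp flip: mult_2)
qed

lemma leibniz_det_permuted_triangular:
  fixes M :: "'a \<Rightarrow> 'a \<Rightarrow> 'b::comm_ring_1" and w :: "'a \<Rightarrow> 'c::ordered_cancel_comm_monoid_add"
  assumes "finite N" "inj_on w N" "p permutes N"
    and diag: "\<And>a. a \<in> N \<Longrightarrow> M a a = 1"
    and lower: "\<And>a b. a \<in> N \<Longrightarrow> b \<in> N \<Longrightarrow> M a b \<noteq> 0 \<Longrightarrow> w b \<le> w a"
  shows "leibniz_det N (\<lambda>a b. M a (p b)) = of_int (sign p)"
proof -
  define g where "g \<pi> = of_int (sign \<pi>) * (\<Prod>v\<in>N. M (\<pi> v) (p v))" for \<pi>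
  have off_diagonal: "g \<pi> = 0" if "\<pi> permutes N" "\<pi> \<noteq> p" for \<pi>
  proof (rule ccontr)
    assume "g \<pi> \<noteq> 0"
    then have "(\<Prod>v\<in>N. M (\<pi> v) (p v)) \<noteq> 0"
      by (auto simp: g_def)
    then have "M (\<pi> v) (p v) \<noteq> 0" if "v \<in> N" for v
      using that prod_zero[OF assms(1), of "\<lambda>v. M (\<pi> v) (p v)"] by auto
    then have "w (p v) \<le> w (\<pi> v)" if "v \<in> N" for v
      using that lower permutes_in_image[OF assms(3)] permutes_in_image[OF \<open>\<pi> permutes N\<close>]
      by blast
    then have "p = \<pi>"
      using permutes_eq_if_weight_le[OF assms(1,2,3) \<open>\<pi> permutes N\<close>] by blast
    with \<open>\<pi> \<noteq> p\<close> show False by simp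
  qed
  have "leibniz_det N (\<lambda>a b. M a (p b)) = (\<Sum>\<pi>\<in>{p}. g \<pi>)"
    unfolding leibniz_det_def g_def[symmetric]
    by (rule sum.mono_neutral_right) (use off_diagonal assms(1,3) finite_permutations in auto)
  also have "\<dots> = of_int (sign p)"
    using diag permutes_in_image[OF assms(3)] by (simp add: g_def)
  finally show ?thesis .
qed

section \<open>Hyperdeterminants of triangularly factored tensors\<close>

lemma hyperdet_cong:
  assumes "\<And>i. (\<And>j. j \<in> {1..K} \<Longrightarrow> i j \<in> {1..n}) \<Longrightarrow> A i = B i"
  shows "hyperdet K n J A = hyperdet K n J B"
proof -
  have "(\<Prod>v=1..n. A (\<lambda>j. \<sigma> j v)) = (\<Prod>v=1..n. B (\<lambda>j. \<sigma> j v))"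
    if "\<sigma> \<in> {1..K} \<rightarrow>\<^sub>E {p. p permutes {1..n}}" for \<sigma>
    using that by (intro prod.cong refl assms) (metis PiE_mem mem_Collect_eq permutes_in_image)
  then show ?thesis
    unfolding hyperdet_def by (auto intro!: sum.cong)
qed

definition factored_tensor :: "nat \<Rightarrow> nat \<Rightarrow> (nat \<Rightarrow> (nat \<Rightarrow> nat) \<Rightarrow> complex)
    \<Rightarrow> (nat \<Rightarrow> nat \<Rightarrow> complex) \<Rightarrow> (nat \<Rightarrow> nat) \<Rightarrow> complex" where
  "factored_tensor n m \<Phi> U i =
    (\<Sum>k \<in> {2..m+1} \<rightarrow>\<^sub>E {1..n}. \<Phi> (i 1) k * (\<Prod>j\<in>{2..m+1}. U (i j) (k j)))"

definition head_perm_sum :: "nat \<Rightarrow> nat set \<Rightarrow> (nat \<Rightarrow> (nat \<Rightarrow> nat) \<Rightarrow> complex)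
    \<Rightarrow> (nat \<Rightarrow> nat \<Rightarrow> nat) \<Rightarrow> complex" where
  "head_perm_sum n J \<Phi> \<kappa> = (\<Sum>q | q permutes {1..n}.
     (if 1 \<in> J then of_int (sign q) else 1) * (\<Prod>v\<in>{1..n}. \<Phi> (q v) (\<kappa> v)))"

lemma sum_signed_slices_eq:
  assumes "{2..m+1} \<subseteq> J"
  shows "(\<Sum>\<sigma> \<in> {1..m+1} \<rightarrow>\<^sub>E {p. p permutes {1..n}}.
      (\<Prod>j\<in>{1..m+1}. if j \<in> J then of_int (sign (\<sigma> j)) else 1) *
      (\<Prod>v\<in>{1..n}. \<Phi> (\<sigma> 1 v) (\<kappa> v) * (\<Prod>j\<in>{2..m+1}. U (\<sigma> j v) (\<kappa> v j))))
    = head_perm_sum n J \<Phi> \<kappa> * (\<Prod>j\<in>{2..m+1}. leibniz_det {1..n} (\<lambda>a b. U a (\<kappa> b j)))"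
proof -
  let ?N = "{1..n}" and ?Ks = "{2..m+1}"
  define g where "g j p = (if j = 1
      then (if 1 \<in> J then of_int (sign p) else 1) * (\<Prod>v\<in>?N. \<Phi> (p v) (\<kappa> v))
      else of_int (sign p) * (\<Prod>v\<in>?N. U (p v) (\<kappa> v j)))" for j and p :: "nat \<Rightarrow> nat"
  have split: "{1..m+1} = insert 1 ?Ks" "1 \<notin> ?Ks" "finite ?Ks"
    by auto
  have summand: "(\<Prod>j\<in>{1..m+1}. if j \<in> J then of_int (sign (\<sigma> j)) else 1) *
      (\<Prod>v\<in>?N. \<Phi> (\<sigma> 1 v) (\<kappa> v) * (\<Prod>j\<in>?Ks. U (\<sigma> j v) (\<kappa> v j)))
      = (\<Prod>j\<in>{1..m+1}. g j (\<sigma> j))" for \<sigma>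
  proof -
    have signs: "(\<Prod>j\<in>?Ks. if j \<in> J then of_int (sign (\<sigma> j)) else 1)
        = (\<Prod>j\<in>?Ks. of_int (sign (\<sigma> j)) :: complex)"
      using assms by (intro prod.cong) auto
    have "(\<Prod>j\<in>?Ks. g j (\<sigma> j))
        = (\<Prod>j\<in>?Ks. of_int (sign (\<sigma> j)) * (\<Prod>v\<in>?N. U (\<sigma> j v) (\<kappa> v j)))"
      using split(2) by (intro prod.cong) (auto simp: g_def)
    also have "\<dots> = (\<Prod>j\<in>?Ks. of_int (sign (\<sigma> j))) * (\<Prod>v\<in>?N. \<Prod>j\<in>?Ks. U (\<sigma> j v) (\<kappa> v j))"
      by (simp only: prod.distrib prod.swap[of _ ?Ks])
    finally have tail: "(\<Prod>j\<in>?Ks. g j (\<sigma> j)) = \<dots>" .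
    have head: "g 1 (\<sigma> 1) = (if 1 \<in> J then of_int (sign (\<sigma> 1)) else 1) * (\<Prod>v\<in>?N. \<Phi> (\<sigma> 1 v) (\<kappa> v))"
      by (simp add: g_def)
    show ?thesis
      unfolding split(1) prod.insert[OF split(3,2)] signs head tail prod.distrib
      by (simp only: mult_ac)
  qed
  have "(\<Sum>\<sigma> \<in> {1..m+1} \<rightarrow>\<^sub>E {p. p permutes ?N}. \<Prod>j\<in>{1..m+1}. g j (\<sigma> j))
      = (\<Prod>j\<in>{1..m+1}. \<Sum>p | p permutes ?N. g j p)"
    by (simp only: prod_sum_PiE finite_permutations finite_atLeastAtMost)
  also have "\<dots> = head_perm_sum n J \<Phi> \<kappa> * (\<Prod>j\<in>?Ks. leibniz_det ?N (\<lambda>a b. U a (\<kappa> b j)))"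
    unfolding split(1) prod.insert[OF split(3,2)]
    by (intro arg_cong2[where f = "(*)"] prod.cong) (auto simp: g_def head_perm_sum_def leibniz_det_def)
  finally show ?thesis
    by (simp only: summand)
qed

lemma hyperdet_factored_tensor_expand:
  assumes "{2..m+1} \<subseteq> J"
  shows "of_nat (fact n) * hyperdet (m+1) n J (factored_tensor n m \<Phi> U) =
    (\<Sum>\<kappa> \<in> {1..n} \<rightarrow>\<^sub>E ({2..m+1} \<rightarrow>\<^sub>E {1..n}).
       head_perm_sum n J \<Phi> \<kappa> * (\<Prod>j\<in>{2..m+1}. leibniz_det {1..n} (\<lambda>a b. U a (\<kappa> b j))))"
proof -
  let ?N = "{1..n}" and ?Ks = "{2..m+1}" and ?P = "{p. p permutes {1..n}}"
  let ?sg = "\<lambda>\<sigma>. \<Prod>j\<in>{1..m+1}. if j \<in> J then of_int (sign (\<sigma> j)) else (1::complex)"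
  have "of_nat (fact n) * hyperdet (m+1) n J (factored_tensor n m \<Phi> U) =
      (\<Sum>\<sigma> \<in> {1..m+1} \<rightarrow>\<^sub>E ?P. ?sg \<sigma> * (\<Prod>v\<in>?N. factored_tensor n m \<Phi> U (\<lambda>j. \<sigma> j v)))"
    by (simp add: hyperdet_def)
  also have "\<dots> = (\<Sum>\<sigma> \<in> {1..m+1} \<rightarrow>\<^sub>E ?P. \<Sum>\<kappa> \<in> ?N \<rightarrow>\<^sub>E (?Ks \<rightarrow>\<^sub>E ?N).
      ?sg \<sigma> * (\<Prod>v\<in>?N. \<Phi> (\<sigma> 1 v) (\<kappa> v) * (\<Prod>j\<in>?Ks. U (\<sigma> j v) (\<kappa> v j))))"
    by (simp add: factored_tensor_def prod_sum_PiE sum_distrib_left finite_PiE)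
  also have "\<dots> = (\<Sum>\<kappa> \<in> ?N \<rightarrow>\<^sub>E (?Ks \<rightarrow>\<^sub>E ?N). \<Sum>\<sigma> \<in> {1..m+1} \<rightarrow>\<^sub>E ?P.
      ?sg \<sigma> * (\<Prod>v\<in>?N. \<Phi> (\<sigma> 1 v) (\<kappa> v) * (\<Prod>j\<in>?Ks. U (\<sigma> j v) (\<kappa> v j))))"
    by (rule sum.swap)
  finally show ?thesis
    by (simp only: sum_signed_slices_eq[OF assms])
qed

lemma sign_factors_cancel:
  assumes "{2..m+1} \<subseteq> J" "J \<subseteq> {1..m+1}" "even (card J)"
  shows "(if 1 \<in> J then of_int (sign p) else 1) * of_int (sign p) ^ m = (1::'a::comm_ring_1)"
proof -
  have even_power: "of_int (sign p) ^ k = (1::'a)" if "even k" for k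
    using that by (simp add: sign_def)
  have ivl: "{1..m+1} = insert 1 {2..m+1}"
    by auto
  show ?thesis
  proof (cases "1 \<in> J")
    case True
    with assms(1,2) have "J = insert 1 {2..m+1}"
      unfolding ivl by blast
    with assms(3) have "even (m + 1)"
      by simp
    with True show ?thesis
      using even_power[of "m + 1"] by simp
  next
    case False
    with assms(1,2) have "J = {2..m+1}"
      unfolding ivl by blast
    with assms(3) False show ?thesis
      using even_power[of m] by simp
  qed
qed

definition diag_family :: "nat \<Rightarrow> nat \<Rightarrow> (nat \<Rightarrow> nat) \<Rightarrow> nat \<Rightarrow> nat \<Rightarrow> nat" where
  "diag_family n m p = (\<lambda>v\<in>{1..n}. \<lambda>j\<in>{2..m+1}. p v)"

lemma diag_family_mem:
  assumes "p permutes {1..n}"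
  shows "diag_family n m p \<in> {1..n} \<rightarrow>\<^sub>E ({2..m+1} \<rightarrow>\<^sub>E {1..n})"
proof -
  have "p v \<in> {1..n}" if "v \<in> {1..n}" for v
    using permutes_in_image[OF assms, of v] that by simp
  then show ?thesis
    by (auto simp: diag_family_def)
qed

lemma inj_on_diag_family:
  assumes "1 \<le> m"
  shows "inj_on (diag_family n m) {p. p permutes {1..n}}"
proof (rule inj_onI)
  fix p q assume pq: "p \<in> {p. p permutes {1..n}}" "q \<in> {p. p permutes {1..n}}"
    and eq: "diag_family n m p = diag_family n m q"
  have "p v = q v" if "v \<in> {1..n}" for v
    using fun_cong[OF fun_cong[OF eq, of v], of 2] that assms by (simp add: diag_family_def)
  with pq show "p = q"
    by (intro permutes_eqI[of p "{1..n}" q]) auto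
qed

locale triangular_factorization =
  fixes n m :: nat and w :: "nat \<Rightarrow> 'w::ordered_cancel_comm_monoid_add"
    and \<Phi> :: "nat \<Rightarrow> (nat \<Rightarrow> nat) \<Rightarrow> complex" and U :: "nat \<Rightarrow> nat \<Rightarrow> complex"
  assumes m_pos: "1 \<le> m"
    and inj_w: "inj_on w {1..n}"
    and U_diag: "\<And>a. a \<in> {1..n} \<Longrightarrow> U a a = 1"
    and U_lower: "\<And>a b. a \<in> {1..n} \<Longrightarrow> b \<in> {1..n} \<Longrightarrow> U a b \<noteq> 0 \<Longrightarrow> w b \<le> w a"
    and \<Phi>_lower: "\<And>a k j. a \<in> {1..n} \<Longrightarrow> k \<in> {2..m+1} \<rightarrow>\<^sub>E {1..n} \<Longrightarrow> \<Phi> a k \<noteq> 0 \<Longrightarrow>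
      j \<in> {2..m+1} \<Longrightarrow> w (k j) \<le> w a"
begin

lemma head_perm_sum_eq_0_if_off_diagonal:
  assumes \<kappa>: "\<kappa> \<in> {1..n} \<rightarrow>\<^sub>E ({2..m+1} \<rightarrow>\<^sub>E {1..n})"
    and cols: "\<And>j. j \<in> {2..m+1} \<Longrightarrow> bij_betw (\<lambda>b. \<kappa> b j) {1..n} {1..n}"
    and off: "\<kappa> \<notin> diag_family n m ` {p. p permutes {1..n}}"
  shows "head_perm_sum n J \<Phi> \<kappa> = 0"
  unfolding head_perm_sum_def
proof (intro sum.neutral ballI)
  fix q assume "q \<in> {q. q permutes {1..n}}"
  then have q: "q permutes {1..n}" by simp
  show "(if 1 \<in> J then of_int (sign q) else 1) * (\<Prod>v\<in>{1..n}. \<Phi> (q v) (\<kappa> v)) = 0"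
  proof (rule ccontr)
    assume "(if 1 \<in> J then of_int (sign q) else 1) * (\<Prod>v\<in>{1..n}. \<Phi> (q v) (\<kappa> v)) \<noteq> 0"
    then have nonzero: "\<Phi> (q v) (\<kappa> v) \<noteq> 0" if "v \<in> {1..n}" for v
      using that prod_zero[of "{1..n}" "\<lambda>v. \<Phi> (q v) (\<kappa> v)"] by auto
    have row: "\<kappa> v \<in> {2..m+1} \<rightarrow>\<^sub>E {1..n}" if "v \<in> {1..n}" for v
      using PiE_mem[OF \<kappa> that] .
    have "w (\<kappa> v j) \<le> w (q v)" if "v \<in> {1..n}" "j \<in> {2..m+1}" for v j
      using \<Phi>_lower[OF _ row[OF that(1)] nonzero[OF that(1)] that(2)]
        permutes_in_image[OF q] that(1) by simp
    then have agree: "\<kappa> v j = q v" if "v \<in> {1..n}" "j \<in> {2..m+1}" for v j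
      using bij_betw_eq_if_weight_le[OF _ inj_w cols[OF that(2)] permutes_imp_bij[OF q]] that
      by simp
    have "\<kappa> = diag_family n m q"
    proof (rule PiE_ext[OF \<kappa> diag_family_mem[OF q]])
      fix v assume v: "v \<in> {1..n}"
      show "\<kappa> v = diag_family n m q v"
      proof (rule PiE_ext[OF row[OF v] PiE_mem[OF diag_family_mem[OF q] v]])
        fix j assume "j \<in> {2..m+1}"
        with agree v show "\<kappa> v j = diag_family n m q v j"
          by (simp add: diag_family_def)
      qed
    qed
    with off q show False
      by blast
  qed
qed

lemma off_diagonal_term_eq_0:
  assumes \<kappa>: "\<kappa> \<in> {1..n} \<rightarrow>\<^sub>E ({2..m+1} \<rightarrow>\<^sub>E {1..n})"
    and off: "\<kappa> \<notin> diag_family n m ` {p. p permutes {1..n}}"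
  shows "head_perm_sum n J \<Phi> \<kappa> * (\<Prod>j\<in>{2..m+1}. leibniz_det {1..n} (\<lambda>a b. U a (\<kappa> b j))) = 0"
proof (cases "\<forall>j\<in>{2..m+1}. inj_on (\<lambda>b. \<kappa> b j) {1..n}")
  case False
  then obtain j u u' where j: "j \<in> {2..m+1}"
    and "u \<in> {1..n}" "u' \<in> {1..n}" "u \<noteq> u'" "\<kappa> u j = \<kappa> u' j"
    by (auto simp: inj_on_def)
  then have "leibniz_det {1..n} (\<lambda>a b. U a (\<kappa> b j)) = 0"
    by (intro leibniz_det_eq_0_if_cols_eq[of _ u u']) auto
  with j show ?thesis
    by (metis finite_atLeastAtMost mult_zero_right prod_zero)
next
  case True
  have "bij_betw (\<lambda>b. \<kappa> b j) {1..n} {1..n}" if j: "j \<in> {2..m+1}" for j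
  proof -
    have "(\<lambda>b. \<kappa> b j) ` {1..n} \<subseteq> {1..n}"
      using PiE_mem[OF PiE_mem[OF \<kappa>] j] by blast
    with True j show ?thesis
      by (simp add: bij_betw_def endo_inj_surj)
  qed
  then have "head_perm_sum n J \<Phi> \<kappa> = 0"
    by (rule head_perm_sum_eq_0_if_off_diagonal[OF \<kappa> _ off])
  then show ?thesis
    by simp
qed

lemma head_perm_sum_diag_family:
  assumes p: "p permutes {1..n}"
  shows "head_perm_sum n J \<Phi> (diag_family n m p)
    = (if 1 \<in> J then of_int (sign p) else 1) * (\<Prod>v\<in>{1..n}. \<Phi> v (\<lambda>j\<in>{2..m+1}. v))"
proof -
  let ?\<kappa> = "diag_family n m p"
  define t where "t q = (if 1 \<in> J then of_int (sign q) else 1) * (\<Prod>v\<in>{1..n}. \<Phi> (q v) (?\<kappa> v))"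
    for q :: "nat \<Rightarrow> nat"
  have "t q = 0" if q: "q permutes {1..n}" "q \<noteq> p" for q
  proof (rule ccontr)
    assume "t q \<noteq> 0"
    then have "\<Phi> (q v) (?\<kappa> v) \<noteq> 0" if "v \<in> {1..n}" for v
      using that prod_zero[of "{1..n}" "\<lambda>v. \<Phi> (q v) (?\<kappa> v)"] by (auto simp: t_def)
    then have "w (?\<kappa> v 2) \<le> w (q v)" if "v \<in> {1..n}" for v
      using \<Phi>_lower PiE_mem[OF diag_family_mem[OF p] that] permutes_in_image[OF q(1)] m_pos that
      by simp
    then have "p = q"
      using m_pos by (intro permutes_eq_if_weight_le[OF _ inj_w p q(1)]) (auto simp: diag_family_def)
    with q show False
      by simp
  qed
  then have "head_perm_sum n J \<Phi> ?\<kappa> = (\<Sum>q\<in>{p}. t q)"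
    unfolding head_perm_sum_def t_def[symmetric]
    using p by (intro sum.mono_neutral_right) (auto simp: finite_permutations)
  also have "\<dots> = (if 1 \<in> J then of_int (sign p) else 1) * (\<Prod>v\<in>{1..n}. \<Phi> (p v) (\<lambda>j\<in>{2..m+1}. p v))"
    by (simp add: t_def diag_family_def)
  also have "(\<Prod>v\<in>{1..n}. \<Phi> (p v) (\<lambda>j\<in>{2..m+1}. p v)) = (\<Prod>v\<in>{1..n}. \<Phi> v (\<lambda>j\<in>{2..m+1}. v))"
    using prod.permute[OF p, of "\<lambda>v. \<Phi> v (\<lambda>j\<in>{2..m+1}. v)"] by (simp add: comp_def)
  finally show ?thesis .
qed

lemma diagonal_term_eq:
  assumes p: "p permutes {1..n}"
    and J: "{2..m+1} \<subseteq> J" "J \<subseteq> {1..m+1}" "even (card J)"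
  shows "head_perm_sum n J \<Phi> (diag_family n m p) *
      (\<Prod>j\<in>{2..m+1}. leibniz_det {1..n} (\<lambda>a b. U a (diag_family n m p b j)))
    = (\<Prod>v\<in>{1..n}. \<Phi> v (\<lambda>j\<in>{2..m+1}. v))"
proof -
  let ?s = "of_int (sign p) :: complex"
  have "leibniz_det {1..n} (\<lambda>a b. U a (diag_family n m p b j)) = ?s" if "j \<in> {2..m+1}" for j
  proof -
    have "leibniz_det {1..n} (\<lambda>a b. U a (diag_family n m p b j)) = leibniz_det {1..n} (\<lambda>a b. U a (p b))"
      using that by (intro leibniz_det_cong) (simp add: diag_family_def)
    also have "\<dots> = ?s"
      using U_lower by (intro leibniz_det_permuted_triangular[OF _ inj_w p U_diag]) auto
    finally show ?thesis .
  qed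
  then have "(\<Prod>j\<in>{2..m+1}. leibniz_det {1..n} (\<lambda>a b. U a (diag_family n m p b j))) = ?s ^ m"
    by simp
  then show ?thesis
    using sign_factors_cancel[OF J, of p, where 'a = complex]
    by (simp add: head_perm_sum_diag_family[OF p] mult_ac)
qed

theorem hyperdet_factored_tensor:
  assumes "{2..m+1} \<subseteq> J" "J \<subseteq> {1..m+1}" "even (card J)"
  shows "hyperdet (m+1) n J (factored_tensor n m \<Phi> U) = (\<Prod>v\<in>{1..n}. \<Phi> v (\<lambda>j\<in>{2..m+1}. v))"
proof -
  let ?P = "{p. p permutes {1..n}}"
  let ?term = "\<lambda>\<kappa>. head_perm_sum n J \<Phi> \<kappa> * (\<Prod>j\<in>{2..m+1}. leibniz_det {1..n} (\<lambda>a b. U a (\<kappa> b j)))"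
  have "of_nat (fact n) * hyperdet (m+1) n J (factored_tensor n m \<Phi> U)
      = (\<Sum>\<kappa> \<in> {1..n} \<rightarrow>\<^sub>E ({2..m+1} \<rightarrow>\<^sub>E {1..n}). ?term \<kappa>)"
    by (rule hyperdet_factored_tensor_expand[OF assms(1)])
  also have "\<dots> = (\<Sum>\<kappa> \<in> diag_family n m ` ?P. ?term \<kappa>)"
  proof (rule sum.mono_neutral_right)
    show "finite ({1..n} \<rightarrow>\<^sub>E ({2..m+1} \<rightarrow>\<^sub>E {1..n}))"
      by (simp add: finite_PiE)
    show "diag_family n m ` ?P \<subseteq> {1..n} \<rightarrow>\<^sub>E ({2..m+1} \<rightarrow>\<^sub>E {1..n})"
      using diag_family_mem by blast
    show "\<forall>\<kappa> \<in> ({1..n} \<rightarrow>\<^sub>E ({2..m+1} \<rightarrow>\<^sub>E {1..n})) - diag_family n m ` ?P. ?term \<kappa> = 0"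
      using off_diagonal_term_eq_0 by blast
  qed
  also have "\<dots> = (\<Sum>p\<in>?P. ?term (diag_family n m p))"
    unfolding sum.reindex[OF inj_on_diag_family[OF m_pos]] by (simp only: comp_def)
  also have "\<dots> = of_nat (fact n) * (\<Prod>v\<in>{1..n}. \<Phi> v (\<lambda>j\<in>{2..m+1}. v))"
    using diagonal_term_eq[OF _ assms] by (simp add: card_permutations)
  finally show ?thesis
    by (subst (asm) mult_left_cancel) simp_all
qed

end

section \<open>Weighted multiple Ramanujan sums\<close>

lemma arith_at_nonzero_dvd: "arith_at g a b \<noteq> 0 \<Longrightarrow> b dvd a"
  by (auto simp: arith_at_def split: if_splits)

text \<open>The summand of \<^const>\<open>wmrs\<close>, written in terms of e_j = d_j^gamma_j.\<close>

definition ramanujan_kernel :: "nat \<Rightarrow> (nat \<Rightarrow> nat) \<Rightarrow> (nat list \<Rightarrow> complex) \<Rightarrow>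
    (nat \<Rightarrow> nat \<Rightarrow> complex) \<Rightarrow> nat \<Rightarrow> (nat \<Rightarrow> nat) \<Rightarrow> complex" where
  "ramanujan_kernel m \<gamma> \<xi> f a e =
    (if \<forall>j\<in>{1..m}. \<exists>d>0. e j = d ^ \<gamma> j
     then \<xi> (map e [1..<m+1]) * arith_at (f 1) a (e 1)
       * (\<Prod>j\<in>{2..m}. arith_at (f j) (e (j-1)) (e j)) * f (m+1) (e m)
     else 0)"

lemma ramanujan_kernel_nonzero_dvd:
  assumes nonzero: "ramanujan_kernel m \<gamma> \<xi> f a e \<noteq> 0" and "1 \<le> l" "l \<le> j" "j \<le> m"
  shows "e j dvd e l" and "e j dvd a"
proof -
  have "(\<Prod>j\<in>{2..m}. arith_at (f j) (e (j-1)) (e j)) \<noteq> 0" and "arith_at (f 1) a (e 1) \<noteq> 0"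
    using nonzero by (auto simp: ramanujan_kernel_def split: if_splits)
  then have chain: "e i dvd e (i - 1)" if "i \<in> {2..m}" for i
    using that prod_zero[of "{2..m}" "\<lambda>j. arith_at (f j) (e (j-1)) (e j)"]
    by (auto intro: arith_at_nonzero_dvd)
  have first: "e 1 dvd a"
    using \<open>arith_at (f 1) a (e 1) \<noteq> 0\<close> by (rule arith_at_nonzero_dvd)
  have chain_dvd: "e i' dvd e l'" if "1 \<le> l'" "l' \<le> i'" "i' \<le> m" for l' i'
    using that(2)
  proof (induction rule: dec_induct)
    case base
    show ?case by simp
  next
    case (step i)
    have "e (Suc i) dvd e i"
      using chain[of "Suc i"] step.hyps that(1,3) by simp
    then show ?case
      using step.IH by (rule dvd_trans)
  qed
  then show "e j dvd e l"
    using assms(2-4) .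
  show "e j dvd a"
    using chain_dvd[of 1 j] assms(2-4) first by (simp add: dvd_trans)
qed

definition ramanujan_tuples :: "nat \<Rightarrow> (nat \<Rightarrow> nat) \<Rightarrow> (nat \<Rightarrow> nat) \<Rightarrow> (nat \<Rightarrow> nat) set" where
  "ramanujan_tuples m \<gamma> ns = {e \<in> {1..m} \<rightarrow>\<^sub>E UNIV.
     \<forall>j\<in>{1..m}. (\<exists>d>0. e j = d ^ \<gamma> j) \<and> e j dvd Gcd (ns ` {1..j+1})}"

lemma ramanujan_kernel_powers:
  assumes "1 \<le> m" and "\<forall>j\<in>{1..m}. 0 < d j"
  shows "ramanujan_kernel m \<gamma> \<xi> f a (\<lambda>j\<in>{1..m}. d j ^ \<gamma> j) =
    \<xi> (map (\<lambda>j. d j ^ \<gamma> j) [1..<m+1]) * arith_at (f 1) a (d 1 ^ \<gamma> 1)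
    * (\<Prod>j\<in>{2..m}. arith_at (f j) (d (j-1) ^ \<gamma> (j-1)) (d j ^ \<gamma> j)) * f (m+1) (d m ^ \<gamma> m)"
proof -
  let ?e = "\<lambda>j\<in>{1..m}. d j ^ \<gamma> j"
  have "\<forall>j\<in>{1..m}. \<exists>d'>0. ?e j = d' ^ \<gamma> j"
    using assms(2) by auto
  then have "ramanujan_kernel m \<gamma> \<xi> f a ?e = \<xi> (map ?e [1..<m+1]) * arith_at (f 1) a (?e 1)
      * (\<Prod>j\<in>{2..m}. arith_at (f j) (?e (j-1)) (?e j)) * f (m+1) (?e m)"
    unfolding ramanujan_kernel_def by (rule if_P)
  moreover have "map ?e [1..<m+1] = map (\<lambda>j. d j ^ \<gamma> j) [1..<m+1]"
    by (intro map_cong) auto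
  moreover have "(\<Prod>j\<in>{2..m}. arith_at (f j) (?e (j-1)) (?e j))
      = (\<Prod>j\<in>{2..m}. arith_at (f j) (d (j-1) ^ \<gamma> (j-1)) (d j ^ \<gamma> j))"
    by (intro prod.cong) auto
  moreover have "?e 1 = d 1 ^ \<gamma> 1" "?e m = d m ^ \<gamma> m"
    using assms(1) by simp_all
  ultimately show ?thesis
    by (simp only:)
qed

lemma bij_betw_ramanujan_tuples:
  assumes \<gamma>: "\<forall>j\<in>{1..m}. 0 < \<gamma> j"
  shows "bij_betw (\<lambda>d. \<lambda>j\<in>{1..m}. d j ^ \<gamma> j)
    {d \<in> {1..m} \<rightarrow>\<^sub>E UNIV. \<forall>j\<in>{1..m}. 0 < d j \<and> d j ^ \<gamma> j dvd Gcd (ns ` {1..j+1})}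
    (ramanujan_tuples m \<gamma> ns)"
proof (rule bij_betw_byWitness[where f' = "\<lambda>e. \<lambda>j\<in>{1..m}. nth_root_nat (\<gamma> j) (e j)"])
  let ?D = "{d \<in> {1..m} \<rightarrow>\<^sub>E UNIV. \<forall>j\<in>{1..m}. 0 < d j \<and> d j ^ \<gamma> j dvd Gcd (ns ` {1..j+1})}"
  let ?T = "ramanujan_tuples m \<gamma> ns"
  let ?pow = "\<lambda>d. \<lambda>j\<in>{1..m}. d j ^ \<gamma> j" and ?root = "\<lambda>e. \<lambda>j\<in>{1..m}. nth_root_nat (\<gamma> j) (e j)"
  have root: "nth_root_nat (\<gamma> j) (e j) ^ \<gamma> j = e j" "0 < nth_root_nat (\<gamma> j) (e j)"
    if "e \<in> ?T" "j \<in> {1..m}" for e j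
  proof -
    have "\<exists>d>0. e j = d ^ \<gamma> j"
      using that by (simp add: ramanujan_tuples_def)
    with \<gamma> that(2) show "nth_root_nat (\<gamma> j) (e j) ^ \<gamma> j = e j" "0 < nth_root_nat (\<gamma> j) (e j)"
      by auto
  qed
  show "\<forall>d\<in>?D. ?root (?pow d) = d"
  proof (intro ballI ext)
    fix d j assume "d \<in> ?D"
    then show "?root (?pow d) j = d j"
      using \<gamma> PiE_arb[of d "{1..m}" "\<lambda>_. UNIV" j] by (cases "j \<in> {1..m}") auto
  qed
  show "\<forall>e\<in>?T. ?pow (?root e) = e"
  proof (intro ballI ext)
    fix e j assume e: "e \<in> ?T"
    then have "e \<in> {1..m} \<rightarrow>\<^sub>E UNIV"
      by (simp add: ramanujan_tuples_def)
    then show "?pow (?root e) j = e j"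
      using root(1)[OF e] PiE_arb[of e "{1..m}" "\<lambda>_. UNIV" j] by (cases "j \<in> {1..m}") auto
  qed
  show "?pow ` ?D \<subseteq> ?T"
    by (auto simp: ramanujan_tuples_def)
  show "?root ` ?T \<subseteq> ?D"
  proof (intro image_subsetI CollectI conjI ballI)
    fix e j assume "e \<in> ?T" "j \<in> {1..m}"
    moreover from this have "e j dvd Gcd (ns ` {1..j+1})"
      by (simp add: ramanujan_tuples_def)
    ultimately show "0 < ?root e j" "?root e j ^ \<gamma> j dvd Gcd (ns ` {1..j+1})"
      using root by simp_all
  qed simp
qed

lemma wmrs_eq_sum_ramanujan_tuples:
  assumes "1 \<le> m" and "\<forall>j\<in>{1..m}. 0 < \<gamma> j"
  shows "wmrs m \<gamma> \<xi> f ns = (\<Sum>e\<in>ramanujan_tuples m \<gamma> ns. ramanujan_kernel m \<gamma> \<xi> f (ns 1) e)"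
  unfolding wmrs_def sum.reindex_bij_betw[OF bij_betw_ramanujan_tuples[OF assms(2)], symmetric]
  by (intro sum.cong refl ramanujan_kernel_powers[symmetric] assms(1)) auto

lemma ramanujan_tuples_iff_dvd_next:
  assumes kernel: "ramanujan_kernel m \<gamma> \<xi> f (ns 1) e \<noteq> 0" and "e \<in> {1..m} \<rightarrow>\<^sub>E UNIV"
  shows "e \<in> ramanujan_tuples m \<gamma> ns \<longleftrightarrow> (\<forall>j\<in>{1..m}. e j dvd ns (j+1))"
proof
  assume "e \<in> ramanujan_tuples m \<gamma> ns"
  then show "\<forall>j\<in>{1..m}. e j dvd ns (j+1)"
    by (simp add: ramanujan_tuples_def dvd_Gcd_iff)
next
  assume dvd_next: "\<forall>j\<in>{1..m}. e j dvd ns (j+1)"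
  have "e j dvd ns l" if "j \<in> {1..m}" "l \<in> {1..j+1}" for j l
  proof (cases "l = 1")
    case True
    then show ?thesis
      using ramanujan_kernel_nonzero_dvd(2)[OF kernel, of j j] that by simp
  next
    case False
    then have l: "1 \<le> l - 1" "l - 1 \<le> j" "l - 1 + 1 = l"
      using that by auto
    then have "e j dvd e (l - 1)"
      using ramanujan_kernel_nonzero_dvd(1)[OF kernel] that(1) by simp
    moreover have "l - 1 \<in> {1..m}"
      using l that(1) by simp
    then have "e (l - 1) dvd ns (l - 1 + 1)"
      using dvd_next by blast
    ultimately show ?thesis
      unfolding l(3) by (rule dvd_trans)
  qed
  moreover have "\<exists>d>0. e j = d ^ \<gamma> j" if "j \<in> {1..m}" for j
    using kernel that by (auto simp: ramanujan_kernel_def split: if_splits)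
  ultimately show "e \<in> ramanujan_tuples m \<gamma> ns"
    using assms(2) by (simp add: ramanujan_tuples_def dvd_Gcd_iff)
qed

lemma sum_ramanujan_tuples_eq_sum_dvd:
  assumes "finite S" and S: "\<And>d. 0 < d \<Longrightarrow> d dvd ns 1 \<Longrightarrow> d \<in> S"
  shows "(\<Sum>e\<in>ramanujan_tuples m \<gamma> ns. ramanujan_kernel m \<gamma> \<xi> f (ns 1) e) =
    (\<Sum>e \<in> {1..m} \<rightarrow>\<^sub>E S. ramanujan_kernel m \<gamma> \<xi> f (ns 1) e
       * (\<Prod>j\<in>{1..m}. if e j dvd ns (j+1) then 1 else 0))"
proof (rule sum.mono_neutral_cong_left)
  show "finite ({1..m} \<rightarrow>\<^sub>E S)"
    using assms(1) by (simp add: finite_PiE)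
  show "ramanujan_tuples m \<gamma> ns \<subseteq> {1..m} \<rightarrow>\<^sub>E S"
  proof
    fix e assume e: "e \<in> ramanujan_tuples m \<gamma> ns"
    have "e j \<in> S" if "j \<in> {1..m}" for j
    proof -
      have "(\<exists>d>0. e j = d ^ \<gamma> j) \<and> e j dvd Gcd (ns ` {1..j+1})"
        using e that by (simp add: ramanujan_tuples_def)
      then show ?thesis
        by (intro S) (auto simp: dvd_Gcd_iff)
    qed
    moreover have "e \<in> {1..m} \<rightarrow>\<^sub>E UNIV"
      using e by (simp add: ramanujan_tuples_def)
    ultimately show "e \<in> {1..m} \<rightarrow>\<^sub>E S"
      by (simp add: PiE_iff)
  qed
  show "\<forall>e \<in> ({1..m} \<rightarrow>\<^sub>E S) - ramanujan_tuples m \<gamma> ns. ramanujan_kernel m \<gamma> \<xi> f (ns 1) e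
      * (\<Prod>j\<in>{1..m}. if e j dvd ns (j+1) then 1 else 0) = 0"
  proof
    fix e assume e: "e \<in> ({1..m} \<rightarrow>\<^sub>E S) - ramanujan_tuples m \<gamma> ns"
    then have "e \<in> {1..m} \<rightarrow>\<^sub>E UNIV"
      by (simp add: PiE_iff)
    with e have "ramanujan_kernel m \<gamma> \<xi> f (ns 1) e = 0 \<or> (\<exists>j\<in>{1..m}. \<not> e j dvd ns (j+1))"
      using ramanujan_tuples_iff_dvd_next by blast
    then show "ramanujan_kernel m \<gamma> \<xi> f (ns 1) e
        * (\<Prod>j\<in>{1..m}. if e j dvd ns (j+1) then 1 else 0) = 0"
      by (auto intro: prod_zero)
  qed
  show "ramanujan_kernel m \<gamma> \<xi> f (ns 1) e =
      ramanujan_kernel m \<gamma> \<xi> f (ns 1) e * (\<Prod>j\<in>{1..m}. if e j dvd ns (j+1) then 1 else 0)"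
    if "e \<in> ramanujan_tuples m \<gamma> ns" for e
    using that by (simp add: ramanujan_tuples_def dvd_Gcd_iff)
qed

lemma sum_PiE_shift_reindex:
  fixes m :: nat
  assumes "inj_on x N"
  shows "(\<Sum>e \<in> {1..m} \<rightarrow>\<^sub>E x ` N. h e) = (\<Sum>k \<in> {2..m+1} \<rightarrow>\<^sub>E N. h (\<lambda>j\<in>{1..m}. x (k (j+1))))"
proof -
  let ?to_values = "\<lambda>k. \<lambda>j\<in>{1..m}. x (k (j+1))"
  let ?to_indices = "\<lambda>e. \<lambda>j\<in>{2..m+1}. inv_into N x (e (j-1))"
  show ?thesis
  proof (rule sum.reindex_bij_witness[where i = ?to_values and j = ?to_indices])
    fix e assume e: "e \<in> {1..m} \<rightarrow>\<^sub>E x ` N"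
    show inverse: "?to_values (?to_indices e) = e"
    proof
      fix j
      show "?to_values (?to_indices e) j = e j"
        using e PiE_mem[OF e, of j] PiE_arb[OF e, of j] by (cases "j \<in> {1..m}") (auto simp: f_inv_into_f)
    qed
    have "inv_into N x (e (j - 1)) \<in> N" if "j \<in> {2..m+1}" for j
      using that by (intro inv_into_into PiE_mem[OF e]) auto
    then show "?to_indices e \<in> {2..m+1} \<rightarrow>\<^sub>E N"
      by auto
    show "h (?to_values (?to_indices e)) = h e"
      by (simp only: inverse)
  next
    fix k assume k: "k \<in> {2..m+1} \<rightarrow>\<^sub>E N"
    show "?to_indices (?to_values k) = k"
    proof
      fix j
      show "?to_indices (?to_values k) j = k j"
        using PiE_mem[OF k, of j] PiE_arb[OF k, of j] assms by (cases "j \<in> {2..m+1}") auto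
    qed
    have "k (j+1) \<in> N" if "j \<in> {1..m}" for j
      using PiE_mem[OF k] that by simp
    then show "?to_values k \<in> {1..m} \<rightarrow>\<^sub>E x ` N"
      by auto
  qed
qed

lemma wmrs_eq_factored_tensor:
  assumes inj: "inj_on x {1..n}" and pos: "\<forall>v\<in>{1..n}. 0 < x v"
    and closed: "factor_closed (x ` {1..n})"
    and "1 \<le> m" and \<gamma>: "\<forall>j\<in>{1..m}. 0 < \<gamma> j"
    and i: "\<And>j. j \<in> {1..m+1} \<Longrightarrow> i j \<in> {1..n}"
  shows "wmrs m \<gamma> \<xi> f (\<lambda>k. x (i k)) = factored_tensor n m
    (\<lambda>a k. ramanujan_kernel m \<gamma> \<xi> f (x a) (\<lambda>j\<in>{1..m}. x (k (j+1))))
    (\<lambda>a b. if x b dvd x a then 1 else 0) i"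
proof -
  have divisors: "d \<in> x ` {1..n}" if "0 < d" "d dvd x (i 1)" for d
    using closed i[of 1] that unfolding factor_closed_def by auto
  have shift: "(\<Prod>j\<in>{2..m+1}. g j) = (\<Prod>j\<in>{1..m}. g (j+1))" for g :: "nat \<Rightarrow> complex"
    using prod.shift_bounds_cl_nat_ivl[of g 1 1 m] by (simp only: one_add_one)
  have "wmrs m \<gamma> \<xi> f (\<lambda>k. x (i k))
      = (\<Sum>e\<in>ramanujan_tuples m \<gamma> (\<lambda>k. x (i k)). ramanujan_kernel m \<gamma> \<xi> f (x (i 1)) e)"
    using assms(4) \<gamma> by (rule wmrs_eq_sum_ramanujan_tuples)
  also have "\<dots> = (\<Sum>e \<in> {1..m} \<rightarrow>\<^sub>E x ` {1..n}. ramanujan_kernel m \<gamma> \<xi> f (x (i 1)) e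
      * (\<Prod>j\<in>{1..m}. if e j dvd x (i (j+1)) then 1 else 0))"
    using divisors by (intro sum_ramanujan_tuples_eq_sum_dvd) simp_all
  also have "\<dots> = (\<Sum>k \<in> {2..m+1} \<rightarrow>\<^sub>E {1..n}.
      ramanujan_kernel m \<gamma> \<xi> f (x (i 1)) (\<lambda>j\<in>{1..m}. x (k (j+1)))
      * (\<Prod>j\<in>{1..m}. if x (k (j+1)) dvd x (i (j+1)) then 1 else 0))"
    unfolding sum_PiE_shift_reindex[OF inj]
    by (intro sum.cong refl arg_cong2[where f = "(*)"] prod.cong) auto
  also have "\<dots> = factored_tensor n m
      (\<lambda>a k. ramanujan_kernel m \<gamma> \<xi> f (x a) (\<lambda>j\<in>{1..m}. x (k (j+1))))
      (\<lambda>a b. if x b dvd x a then 1 else 0) i"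
    unfolding factored_tensor_def shift ..
  finally show ?thesis .
qed

lemma ex_pos_power_iff_is_nth_power:
  fixes y :: nat
  assumes "0 < g" "0 < y"
  shows "(\<exists>d>0. y = d ^ g) \<longleftrightarrow> is_nth_power g y"
proof
  assume "is_nth_power g y"
  then obtain d where "y = d ^ g"
    by (auto elim: is_nth_powerE)
  moreover from this assms have "d \<noteq> 0"
    by (metis power_0_left less_irrefl)
  ultimately show "\<exists>d>0. y = d ^ g"
    by blast
qed (auto intro: is_nth_powerI)

lemma ex_power_Lcm_iff:
  fixes y :: nat
  assumes "0 < y" "finite G" "\<forall>g\<in>G. 0 < g"
  shows "(\<forall>g\<in>G. \<exists>d>0. y = d ^ g) \<longleftrightarrow> (\<exists>d>0. y = d ^ Lcm G)"
proof -
  have "0 < Lcm G"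
    using assms(2,3) Lcm_0_iff_nat[OF assms(2)] by (metis gr0I less_irrefl)
  have "(\<forall>g\<in>G. \<exists>d>0. y = d ^ g) \<longleftrightarrow> (\<forall>g\<in>G. \<forall>p. prime p \<longrightarrow> g dvd multiplicity p y)"
    using assms(1,3) by (simp add: ex_pos_power_iff_is_nth_power is_nth_power_conv_multiplicity_nat)
  also have "\<dots> \<longleftrightarrow> (\<forall>p. prime p \<longrightarrow> Lcm G dvd multiplicity p y)"
    by (auto simp: Lcm_dvd_iff)
  also have "\<dots> \<longleftrightarrow> (\<exists>d>0. y = d ^ Lcm G)"
    using \<open>0 < Lcm G\<close> assms(1)
    by (simp add: ex_pos_power_iff_is_nth_power is_nth_power_conv_multiplicity_nat)
  finally show ?thesis .
qed

lemma ramanujan_kernel_diagonal: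
  assumes "0 < a" "1 \<le> m" "\<forall>j\<in>{1..m}. 0 < \<gamma> j"
  shows "ramanujan_kernel m \<gamma> \<xi> f a (\<lambda>j\<in>{1..m}. a) = (\<Prod>j\<in>{1..m}. f j 1) *
    (\<xi> (replicate m a) * restr_pow (Lcm (\<gamma> ` {1..m})) (f (m+1)) a)"
proof -
  let ?e = "\<lambda>j\<in>{1..m}. a" and ?L = "Lcm (\<gamma> ` {1..m})"
  have powers: "(\<forall>j\<in>{1..m}. \<exists>d>0. ?e j = d ^ \<gamma> j) \<longleftrightarrow> a_pow ?L a = 1"
    using ex_power_Lcm_iff[of a "\<gamma> ` {1..m}"] assms by (simp add: a_pow_def)
  show ?thesis
  proof (cases "a_pow ?L a = 1")
    case True
    have "map ?e [1..<m+1] = map (\<lambda>_. a) [1..<m+1]"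
      by (intro map_cong) auto
    then have "map ?e [1..<m+1] = replicate m a"
      by (simp add: map_replicate_const)
    moreover have "(\<Prod>j\<in>{2..m}. arith_at (f j) (?e (j-1)) (?e j)) = (\<Prod>j\<in>{2..m}. f j 1)"
      using assms(1) by (intro prod.cong) (auto simp: arith_at_def)
    moreover have "?e 1 = a" "?e m = a" "arith_at (f 1) a a = f 1 1"
      using assms(1,2) by (simp_all add: arith_at_def)
    moreover have "(\<Prod>j\<in>{1..m}. f j 1) = f 1 1 * (\<Prod>j\<in>{2..m}. f j 1)"
      using assms(2) by (simp add: prod.atLeast_Suc_atMost numeral_2_eq_2)
    moreover have "ramanujan_kernel m \<gamma> \<xi> f a ?e = \<xi> (map ?e [1..<m+1]) * arith_at (f 1) a (?e 1)
        * (\<Prod>j\<in>{2..m}. arith_at (f j) (?e (j-1)) (?e j)) * f (m+1) (?e m)"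
      using True powers unfolding ramanujan_kernel_def by (intro if_P) simp
    ultimately show ?thesis
      using True by (simp only: restr_pow_def mult_1 mult_ac)
  next
    case False
    then have "\<not> (\<forall>j\<in>{1..m}. \<exists>d>0. ?e j = d ^ \<gamma> j)"
      using powers by blast
    then have "ramanujan_kernel m \<gamma> \<xi> f a ?e = 0"
      unfolding ramanujan_kernel_def by (rule if_not_P)
    moreover have "a_pow ?L a = 0"
      using False by (simp add: a_pow_def split: if_splits)
    ultimately show ?thesis
      by (simp add: restr_pow_def)
  qed
qed

lemma triangular_factorization_ramanujan:
  assumes "inj_on x {1..n}" and pos: "\<forall>v\<in>{1..n}. 0 < x v" and "1 \<le> m"
  shows "triangular_factorization n m x
    (\<lambda>a k. ramanujan_kernel m \<gamma> \<xi> f (x a) (\<lambda>j\<in>{1..m}. x (k (j+1))))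
    (\<lambda>a b. if x b dvd x a then 1 else 0)"
proof
  show "1 \<le> m" "inj_on x {1..n}"
    using assms(1,3) by simp_all
  show "(if x a dvd x a then 1 else 0) = (1::complex)" for a
    by simp
  show "x b \<le> x a" if "a \<in> {1..n}" "(if x b dvd x a then 1 else 0) \<noteq> (0::complex)" for a b
    using that pos by (simp add: dvd_imp_le split: if_splits)
  show "x (k j) \<le> x a" if a: "a \<in> {1..n}" and j: "j \<in> {2..m+1}"
    and nonzero: "ramanujan_kernel m \<gamma> \<xi> f (x a) (\<lambda>j\<in>{1..m}. x (k (j+1))) \<noteq> 0" for a k j
  proof -
    define i where "i = j - 1"
    have i: "j = i + 1" "1 \<le> i" "i \<le> m"
      using j by (auto simp: i_def)
    from ramanujan_kernel_nonzero_dvd(2)[OF nonzero i(2) order.refl i(3)]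
    have "x (k j) dvd x a"
      using i by simp
    with pos a show ?thesis
      by (simp add: dvd_imp_le)
  qed
qed

theorem corollary4p8:
  fixes n m :: nat and x :: "nat \<Rightarrow> nat" and \<gamma> :: "nat \<Rightarrow> nat"
    and f :: "nat \<Rightarrow> nat \<Rightarrow> complex" and \<xi> :: "nat list \<Rightarrow> complex"
    and I :: "nat set"
  assumes "inj_on x {1..n}"
    and "\<forall>i\<in>{1..n}. 0 < x i"
    and "factor_closed (x ` {1..n})"
    and "1 \<le> m"
    and "\<forall>j\<in>{1..m}. 1 \<le> \<gamma> j"
    and "I = (if even m then {2..m+1} else {1..m+1})"
  shows "hyperdet (m+1) n I (\<lambda>i. wmrs m \<gamma> \<xi> f (\<lambda>k. x (i k))) =
    (\<Prod>j\<in>{1..m}. f j 1) ^ n *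
    (\<Prod>v\<in>{1..n}. \<xi> (replicate m (x v)) * restr_pow (Lcm (\<gamma> ` {1..m})) (f (m+1)) (x v))"
proof -
  let ?\<Phi> = "\<lambda>a k. ramanujan_kernel m \<gamma> \<xi> f (x a) (\<lambda>j\<in>{1..m}. x (k (j+1)))"
  let ?U = "\<lambda>a b. if x b dvd x a then 1 else 0 :: complex"
  interpret triangular_factorization n m x ?\<Phi> ?U
    using assms(1,2,4) by (rule triangular_factorization_ramanujan)
  have \<gamma>: "\<forall>j\<in>{1..m}. 0 < \<gamma> j"
    using assms(5) by auto
  have I: "{2..m+1} \<subseteq> I" "I \<subseteq> {1..m+1}" "even (card I)"
    using assms(6) by auto
  have "hyperdet (m+1) n I (\<lambda>i. wmrs m \<gamma> \<xi> f (\<lambda>k. x (i k))) =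
      hyperdet (m+1) n I (factored_tensor n m ?\<Phi> ?U)"
    using assms(1-4) \<gamma> by (intro hyperdet_cong wmrs_eq_factored_tensor) auto
  also have "\<dots> = (\<Prod>v\<in>{1..n}. ?\<Phi> v (\<lambda>j\<in>{2..m+1}. v))"
    using I by (rule hyperdet_factored_tensor)
  also have "\<dots> = (\<Prod>v\<in>{1..n}. ramanujan_kernel m \<gamma> \<xi> f (x v) (\<lambda>j\<in>{1..m}. x v))"
    by (intro prod.cong refl arg_cong2[where f = "ramanujan_kernel m \<gamma> \<xi> f"] restrict_ext) simp_all
  also have "\<dots> = (\<Prod>v\<in>{1..n}. (\<Prod>j\<in>{1..m}. f j 1) *
      (\<xi> (replicate m (x v)) * restr_pow (Lcm (\<gamma> ` {1..m})) (f (m+1)) (x v)))"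
    using assms(2,4) \<gamma> by (intro prod.cong refl ramanujan_kernel_diagonal) auto
  finally show ?thesis
    by (simp add: prod.distrib)
qed

end
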